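(* Let $\alpha\in(0,1)$, $\lambda>0$, and let $\Theta$ have density $f_\Theta(\theta)=\frac{(\theta-\lambda)^{-\alpha}\lambda^\alpha}{\theta\,\Gamma(1-\alpha)\Gamma(\alpha)}$ for $\theta\ge\lambda$ (and $0$ otherwise). Let $(X_1,\dots,X_n)$ be such that, given $\Theta=\theta$, $X_1,\dots,X_n$ are independent exponential random variables with hazard rate $\theta$. Then the $X_i$ are identically distributed with marginal survival function $\bar F_X(x)=\Pr(X_i>x)=\Gamma(\alpha,\lambda x)/\Gamma(\alpha)$, and the survival copula $\bar C$ of $(X_1,\dots,X_n)$, i.e. the function with $\Pr(X_1>x_1,\dots,X_n>x_n)=\bar C(\bar F_X(x_1),\dots,\bar F_X(x_n))$, is $$\bar C(u_1,\dots,u_n)=1-F_{G_\alpha}\big(Q_{G_\alpha}(1-u_1)+\dots+Q_{G_\alpha}(1-u_n)\big),\qquad u_i\in[0,1],$$ where $F_{G_\alpha}$ and $Q_{G_\alpha}$ denote the cdf and the quantile function of the gamma distribution with shape parameter $\alpha$ and unit scale.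
   Context: $\Gamma(a,x)=\int_x^\infty t^{a-1}e^{-t}\,dt$ is the upper incomplete gamma function. The gamma distribution with shape $\alpha$ and unit scale has density $x^{\alpha-1}e^{-x}/\Gamma(\alpha)$, $x>0$. *)

theory Defs
  imports "HOL-Probability.Probability"
begin

definition upper_inc_Gamma :: "real \<Rightarrow> real \<Rightarrow> real" where
  "upper_inc_Gamma a x = (\<integral>t\<in>{x..}. t powr (a - 1) * exp (- t) \<partial>lborel)"

definition theta_density :: "real \<Rightarrow> real \<Rightarrow> real \<Rightarrow> real" where
  "theta_density \<alpha> l \<theta> =
     (if \<theta> \<ge> l then (\<theta> - l) powr (- \<alpha>) * l powr \<alpha> / (\<theta> * Gamma (1 - \<alpha>) * Gamma \<alpha>)
      else 0)"

definition gamma_cdf :: "real \<Rightarrow> real \<Rightarrow> real" where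
  "gamma_cdf a x = (if x \<le> 0 then 0
      else (\<integral>t\<in>{0..x}. t powr (a - 1) * exp (- t) / Gamma a \<partial>lborel))"

text \<open>Quantile (generalized inverse) of the gamma distribution, taken over its
  support [0,infty), so that the quantile at 0 is 0.\<close>
definition gamma_quantile :: "real \<Rightarrow> real \<Rightarrow> real" where
  "gamma_quantile a p = Inf {x. 0 \<le> x \<and> p \<le> gamma_cdf a x}"

definition surv_copula :: "real \<Rightarrow> nat \<Rightarrow> (nat \<Rightarrow> real) \<Rightarrow> real" where
  "surv_copula a n u = 1 - gamma_cdf a (\<Sum>i<n. gamma_quantile a (1 - u i))"

definition marg_surv :: "real \<Rightarrow> real \<Rightarrow> real \<Rightarrow> real" where
  "marg_surv \<alpha> l x = upper_inc_Gamma \<alpha> (l * x) / Gamma \<alpha>"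

end

theory Submission
  imports Defs
begin

text \<open>Conditionally on \<open>\<Theta> = \<theta>\<close>, all \<open>X\<^sub>i\<close> with \<open>i \<in> I\<close> exceed \<open>x\<^sub>i\<close> with probability
  \<open>exp (- \<theta> s)\<close>, \<open>s = (\<Sum>i\<in>I. x\<^sub>i)\<close>; so every joint survival probability is the Laplace
  transform of \<open>\<Theta>\<close> at some \<open>s \<ge> 0\<close>. Writing the factor \<open>1 / \<theta>\<close> of the density as
  \<open>\<integral>\<^sub>0\<^sup>\<infinity> exp (- \<theta> r) dr\<close> and integrating over \<open>\<theta>\<close> first turns this transform into
  \<open>\<Gamma>(\<alpha>, \<lambda> s) / \<Gamma>(\<alpha>) = 1 - F(\<lambda> s)\<close>, \<open>F\<close> the gamma cdf. Thus the marginal survival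
  function is \<open>1 - F(\<lambda> x)\<close>, and since \<open>F\<close> is strictly increasing on \<open>[0, \<infinity>)\<close> its quantile
  function maps \<open>F(\<lambda> x\<^sub>i)\<close> back to \<open>\<lambda> x\<^sub>i\<close>, so that \<open>1 - F(\<lambda> \<Sum>x\<^sub>i)\<close> is the claimed copula
  evaluated at the marginals.\<close>

section \<open>Gamma integrals\<close>

lemma nn_integral_powr_exp_scaled:
  fixes b u :: real assumes b: "0 < b" and u: "0 < u"
  shows "(\<integral>\<^sup>+t. ennreal (indicator {0..} t * t powr (b - 1) * exp (- (u * t))) \<partial>lborel)
       = ennreal (Gamma b / u powr b)"
proof -
  have "(\<integral>\<^sup>+t. ennreal (indicator {0..} t * t powr (b - 1) * exp (- (u * t))) \<partial>lborel)
      = ennreal \<bar>1 / u\<bar> * (\<integral>\<^sup>+v. ennreal (indicator {0..} (0 + 1 / u * v) * (0 + 1 / u * v) powr (b - 1)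
            * exp (- (u * (0 + 1 / u * v)))) \<partial>lborel)"
    by (rule nn_integral_real_affine) (use u in auto)
  also have "\<dots> = ennreal (1 / u) * (\<integral>\<^sup>+v. ennreal (u powr (1 - b))
                    * ennreal (indicator {0..} v * v powr (b - 1) / exp v) \<partial>lborel)"
    using u by (intro arg_cong2[where f = "(*)"] nn_integral_cong)
      (auto simp: ennreal_mult'[symmetric] indicator_def powr_divide powr_diff exp_minus field_simps)
  also have "\<dots> = ennreal (1 / u) * (ennreal (u powr (1 - b)) * ennreal (Gamma b))"
    by (subst nn_integral_cmult) (simp_all add: Gamma_conv_nn_integral_real[OF b])
  also have "\<dots> = ennreal (Gamma b / u powr b)"
    using u b by (simp add: ennreal_mult'[symmetric] powr_diff Gamma_real_pos less_imp_le)
  finally show ?thesis .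
qed

lemma nn_integral_exp_scaled:
  fixes u :: real assumes u: "0 < u"
  shows "(\<integral>\<^sup>+t. ennreal (indicator {0<..} t * exp (- (u * t))) \<partial>lborel) = ennreal (1 / u)"
proof -
  have "(\<integral>\<^sup>+t. ennreal (indicator {0<..} t * exp (- (u * t))) \<partial>lborel)
      = (\<integral>\<^sup>+t. ennreal (indicator {0..} t * t powr (1 - 1) * exp (- (u * t))) \<partial>lborel)"
    by (intro nn_integral_cong) (auto simp: indicator_def)
  then show ?thesis
    using nn_integral_powr_exp_scaled[of 1 u] u by simp
qed

lemma nn_integral_shifted_powr_exp:
  fixes l u a :: real assumes u: "0 < u" and a: "a < 1"
  shows "(\<integral>\<^sup>+\<theta>. ennreal (indicator {l..} \<theta> * (\<theta> - l) powr (- a) * exp (- (\<theta> * u))) \<partial>lborel)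
       = ennreal (exp (- (l * u)) * (Gamma (1 - a) / u powr (1 - a)))"
proof -
  have "(\<integral>\<^sup>+\<theta>. ennreal (indicator {l..} \<theta> * (\<theta> - l) powr (- a) * exp (- (\<theta> * u))) \<partial>lborel)
      = ennreal \<bar>1\<bar> * (\<integral>\<^sup>+t. ennreal (indicator {l..} (l + 1 * t) * ((l + 1 * t) - l) powr (- a)
            * exp (- ((l + 1 * t) * u))) \<partial>lborel)"
    by (rule nn_integral_real_affine) auto
  also have "\<dots> = (\<integral>\<^sup>+t. ennreal (indicator {l..} (l + t) * t powr (- a) * exp (- ((l + t) * u))) \<partial>lborel)"
    by simp
  also have "\<dots> = (\<integral>\<^sup>+t. ennreal (exp (- (l * u)))
                    * ennreal (indicator {0..} t * t powr ((1 - a) - 1) * exp (- (u * t))) \<partial>lborel)"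
    by (intro nn_integral_cong)
       (auto simp: ennreal_mult'[symmetric] indicator_def distrib_right exp_add exp_diff exp_minus field_simps)
  also have "\<dots> = ennreal (exp (- (l * u))) * ennreal (Gamma (1 - a) / u powr (1 - a))"
    by (subst nn_integral_cmult) (use nn_integral_powr_exp_scaled[of "1 - a" u] a u in auto)
  finally show ?thesis
    by (simp add: ennreal_mult'[symmetric])
qed

lemma nn_integral_gamma_integrand_finite:
  fixes a :: real assumes a: "0 < a" and A: "A \<subseteq> {0..}"
  shows "(\<integral>\<^sup>+v. ennreal (indicator A v * (v powr (a - 1) * exp (- v))) \<partial>lborel) < \<infinity>"
proof -
  have "(\<integral>\<^sup>+v. ennreal (indicator A v * (v powr (a - 1) * exp (- v))) \<partial>lborel)
     \<le> (\<integral>\<^sup>+v. ennreal (indicator {0..} v * v powr (a - 1) / exp v) \<partial>lborel)"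
    using A by (intro nn_integral_mono) (auto simp: indicator_def exp_minus field_simps)
  also have "\<dots> < \<infinity>"
    by (simp add: Gamma_conv_nn_integral_real[OF a, symmetric])
  finally show ?thesis .
qed

lemma integral_eq_nn_integral_gamma_integrand:
  fixes a :: real assumes "0 < a" and "A \<in> sets borel" and "A \<subseteq> {0..}"
  shows "(\<integral>v. indicator A v * (v powr (a - 1) * exp (- v)) \<partial>lborel)
       = enn2real (\<integral>\<^sup>+v. ennreal (indicator A v * (v powr (a - 1) * exp (- v))) \<partial>lborel)"
  using assms by (intro integral_eq_nn_integral) (auto intro!: AE_I2 simp: indicator_def)

lemma upper_inc_Gamma_nonneg: "0 \<le> upper_inc_Gamma a x"
  unfolding upper_inc_Gamma_def set_lebesgue_integral_def
  by (auto intro!: Bochner_Integration.integral_nonneg simp: indicator_def)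

lemma upper_inc_Gamma_eq_nn_integral:
  fixes a y :: real assumes a: "0 < a" and y: "0 \<le> y"
  shows "ennreal (upper_inc_Gamma a y)
       = (\<integral>\<^sup>+v. ennreal (indicator {y<..} v * (v powr (a - 1) * exp (- v))) \<partial>lborel)"
proof -
  have "upper_inc_Gamma a y = (\<integral>v. indicator {y..} v * (v powr (a - 1) * exp (- v)) \<partial>lborel)"
    unfolding upper_inc_Gamma_def set_lebesgue_integral_def by simp
  also have "\<dots> = enn2real (\<integral>\<^sup>+v. ennreal (indicator {y..} v * (v powr (a - 1) * exp (- v))) \<partial>lborel)"
    by (rule integral_eq_nn_integral_gamma_integrand) (use a y in auto)
  also have "(\<integral>\<^sup>+v. ennreal (indicator {y..} v * (v powr (a - 1) * exp (- v))) \<partial>lborel)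
      = (\<integral>\<^sup>+v. ennreal (indicator {y<..} v * (v powr (a - 1) * exp (- v))) \<partial>lborel)"
    by (rule nn_integral_cong_AE)
       (use AE_lborel_singleton[of y] in \<open>eventually_elim, auto simp: indicator_def\<close>)
  moreover have "(\<integral>\<^sup>+v. ennreal (indicator {y<..} v * (v powr (a - 1) * exp (- v))) \<partial>lborel) < \<infinity>"
    by (rule nn_integral_gamma_integrand_finite[OF a]) (use y in auto)
  ultimately show ?thesis
    by simp
qed

lemma gamma_cdf_upper_inc_Gamma:
  fixes a y :: real assumes a: "0 < a" and y: "0 \<le> y"
  shows "gamma_cdf a y = 1 - upper_inc_Gamma a y / Gamma a"
proof -
  define L where "L = (\<integral>\<^sup>+v. ennreal (indicator {0<..y} v * (v powr (a - 1) * exp (- v))) \<partial>lborel)"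
  have "ennreal (Gamma a) = (\<integral>\<^sup>+v. ennreal (indicator {0..} v * v powr (a - 1) / exp v) \<partial>lborel)"
    using Gamma_conv_nn_integral_real[OF a] by simp
  also have "\<dots> = (\<integral>\<^sup>+v. ennreal (indicator {0<..y} v * (v powr (a - 1) * exp (- v)))
                    + ennreal (indicator {y<..} v * (v powr (a - 1) * exp (- v))) \<partial>lborel)"
    by (intro nn_integral_cong) (use y in \<open>auto simp: indicator_def exp_minus field_simps\<close>)
  also have "\<dots> = L + ennreal (upper_inc_Gamma a y)"
    unfolding L_def upper_inc_Gamma_eq_nn_integral[OF a y] by (rule nn_integral_add) auto
  finally have "Gamma a = enn2real (L + ennreal (upper_inc_Gamma a y))"
    using a by (metis Gamma_real_pos enn2real_ennreal less_imp_le)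
  moreover have "L < \<infinity>"
    unfolding L_def by (rule nn_integral_gamma_integrand_finite[OF a]) auto
  ultimately have "upper_inc_Gamma a y = Gamma a - enn2real L"
    using upper_inc_Gamma_nonneg[of a y] by (simp add: enn2real_plus)
  moreover have "gamma_cdf a y = enn2real L / Gamma a"
  proof -
    have "(\<integral>t\<in>{0..y}. t powr (a - 1) * exp (- t) / Gamma a \<partial>lborel)
        = (\<integral>v. indicator {0<..y} v * (v powr (a - 1) * exp (- v)) \<partial>lborel) / Gamma a"
      unfolding set_lebesgue_integral_def integral_divide_zero[symmetric]
      by (intro integral_cong_AE) (use AE_lborel_singleton[of 0] in \<open>auto simp: indicator_def\<close>)
    moreover have "(\<integral>v. indicator {0<..y} v * (v powr (a - 1) * exp (- v)) \<partial>lborel) = enn2real L"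
      unfolding L_def by (rule integral_eq_nn_integral_gamma_integrand[OF a]) auto
    ultimately show ?thesis
      unfolding gamma_cdf_def using y L_def by auto
  qed
  ultimately show ?thesis
    using Gamma_real_pos[OF a] by (simp add: field_simps)
qed

lemma upper_inc_Gamma_strict_antimono:
  fixes a y z :: real assumes a: "0 < a" and y: "0 \<le> y" and yz: "y < z"
  shows "upper_inc_Gamma a z < upper_inc_Gamma a y"
proof -
  define G where "G v = v powr (a - 1) * exp (- v)" for v :: real
  define Mid where "Mid = (\<integral>\<^sup>+v. ennreal (indicator {y<..z} v * G v) \<partial>lborel)"
  have "ennreal (upper_inc_Gamma a y)
      = (\<integral>\<^sup>+v. ennreal (indicator {y<..z} v * G v) + ennreal (indicator {z<..} v * G v) \<partial>lborel)"
    unfolding upper_inc_Gamma_eq_nn_integral[OF a y]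
    by (intro nn_integral_cong) (use yz in \<open>auto simp: indicator_def G_def\<close>)
  also have "\<dots> = Mid + ennreal (upper_inc_Gamma a z)"
    unfolding Mid_def upper_inc_Gamma_eq_nn_integral[OF a order.trans[OF y less_imp_le[OF yz]]] G_def
    by (rule nn_integral_add) auto
  finally have sum: "ennreal (upper_inc_Gamma a y) = Mid + ennreal (upper_inc_Gamma a z)" .
  have "Mid \<noteq> 0"
  proof
    assume "Mid = 0"
    then have "AE v in lborel. indicator {y<..z} v * G v = 0"
      unfolding Mid_def by (subst (asm) nn_integral_0_iff_AE) (auto simp: G_def)
    then have "AE v in lborel. v \<notin> {y<..z}"
      by eventually_elim (use y in \<open>auto simp: G_def indicator_def\<close>)
    then have "emeasure lborel {y<..z} = 0"
      by (subst (asm) AE_iff_measurable[of "{y<..z}"]) auto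
    with yz show False by simp
  qed
  moreover have "Mid < \<infinity>"
    unfolding Mid_def G_def by (rule nn_integral_gamma_integrand_finite[OF a]) (use y in auto)
  ultimately have "0 < enn2real Mid"
    by (simp add: enn2real_positive_iff zero_less_iff_neq_zero)
  moreover have "upper_inc_Gamma a y = enn2real Mid + upper_inc_Gamma a z"
    using arg_cong[OF sum, of enn2real] \<open>Mid < \<infinity>\<close>
    by (simp add: enn2real_plus upper_inc_Gamma_nonneg)
  ultimately show ?thesis
    by simp
qed

lemma gamma_cdf_strict_mono:
  fixes a y z :: real assumes "0 < a" and "0 \<le> y" and "y < z"
  shows "gamma_cdf a y < gamma_cdf a z"
  using upper_inc_Gamma_strict_antimono[OF assms] Gamma_real_pos[OF \<open>0 < a\<close>] assms
  by (simp add: gamma_cdf_upper_inc_Gamma divide_strict_right_mono)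

lemma gamma_quantile_gamma_cdf:
  fixes a y :: real assumes a: "0 < a" and y: "0 \<le> y"
  shows "gamma_quantile a (gamma_cdf a y) = y"
proof -
  have "{x. 0 \<le> x \<and> gamma_cdf a y \<le> gamma_cdf a x} = {y..}"
  proof (intro set_eqI iffI)
    fix x assume "x \<in> {x. 0 \<le> x \<and> gamma_cdf a y \<le> gamma_cdf a x}"
    then show "x \<in> {y..}"
      using gamma_cdf_strict_mono[OF a, of x y] by (auto simp: not_le[symmetric])
  next
    fix x assume "x \<in> {y..}"
    then show "x \<in> {x. 0 \<le> x \<and> gamma_cdf a y \<le> gamma_cdf a x}"
      using gamma_cdf_strict_mono[OF a y, of x] y by (cases "x = y") auto
  qed
  then show ?thesis
    unfolding gamma_quantile_def by simp
qed

lemma nn_integral_shifted_scaled_gamma_integrand: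
  fixes a l s :: real assumes a: "0 < a" and l: "0 < l" and s: "0 \<le> s"
  shows "(\<integral>\<^sup>+r. ennreal (indicator {0<..} r * exp (- (l * (s + r))) * (s + r) powr (a - 1)) \<partial>lborel)
       = ennreal (upper_inc_Gamma a (l * s) / l powr a)"
proof -
  have "(\<integral>\<^sup>+r. ennreal (indicator {0<..} r * exp (- (l * (s + r))) * (s + r) powr (a - 1)) \<partial>lborel)
      = ennreal \<bar>1 / l\<bar> * (\<integral>\<^sup>+v. ennreal (indicator {0<..} (- s + 1 / l * v)
            * exp (- (l * (s + (- s + 1 / l * v)))) * (s + (- s + 1 / l * v)) powr (a - 1)) \<partial>lborel)"
    by (rule nn_integral_real_affine) (use l in auto)
  also have "\<dots> = ennreal (1 / l) * (\<integral>\<^sup>+v. ennreal (l powr (1 - a))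
                    * ennreal (indicator {l * s<..} v * (v powr (a - 1) * exp (- v))) \<partial>lborel)"
  proof (intro arg_cong2[where f = "(*)"] nn_integral_cong)
    fix v :: real
    show "ennreal (indicator {0<..} (- s + 1 / l * v) * exp (- (l * (s + (- s + 1 / l * v))))
            * (s + (- s + 1 / l * v)) powr (a - 1))
        = ennreal (l powr (1 - a)) * ennreal (indicator {l * s<..} v * (v powr (a - 1) * exp (- v)))"
    proof (cases "l * s < v")
      case True
      moreover have "0 < v"
        using True l s by (smt (verit) mult_nonneg_nonneg)
      ultimately show ?thesis
        using l by (simp add: ennreal_mult'[symmetric] powr_divide powr_diff field_simps)
    qed (use l in \<open>simp_all add: field_simps\<close>)
  qed (use l in simp)
  also have "\<dots> = ennreal (1 / l) * (ennreal (l powr (1 - a)) * ennreal (upper_inc_Gamma a (l * s)))"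
    using upper_inc_Gamma_eq_nn_integral[OF a, of "l * s"] l s by (subst nn_integral_cmult) simp_all
  also have "\<dots> = ennreal (upper_inc_Gamma a (l * s) / l powr a)"
    using l by (simp add: ennreal_mult'[symmetric] upper_inc_Gamma_nonneg powr_diff)
  finally show ?thesis .
qed

section \<open>The Laplace transform of the mixing density\<close>

lemma theta_density_nonneg:
  assumes "0 < a" and "a < 1" and "0 < l"
  shows "0 \<le> theta_density a l \<theta>"
  using assms by (auto simp: theta_density_def Gamma_real_pos less_imp_le intro!: divide_nonneg_pos)

lemma borel_measurable_theta_density[measurable]: "theta_density a l \<in> borel_measurable borel"
  unfolding theta_density_def by measurable

lemma theta_density_eq_nn_integral:
  fixes a l :: real assumes a: "0 < a" "a < 1" and l: "0 < l"
  shows "ennreal (theta_density a l \<theta>)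
       = (\<integral>\<^sup>+r. ennreal (l powr a / (Gamma (1 - a) * Gamma a) * indicator {l..} \<theta> * (\<theta> - l) powr (- a)
            * indicator {0<..} r * exp (- (\<theta> * r))) \<partial>lborel)"
proof (cases "l \<le> \<theta>")
  case True
  then have \<theta>: "0 < \<theta>"
    using l by simp
  define c where "c = l powr a / (Gamma (1 - a) * Gamma a) * (\<theta> - l) powr (- a)"
  have "0 \<le> c"
    using a by (simp add: c_def Gamma_real_pos less_imp_le)
  have "(\<integral>\<^sup>+r. ennreal (l powr a / (Gamma (1 - a) * Gamma a) * indicator {l..} \<theta> * (\<theta> - l) powr (- a)
            * indicator {0<..} r * exp (- (\<theta> * r))) \<partial>lborel)
      = (\<integral>\<^sup>+r. ennreal c * ennreal (indicator {0<..} r * exp (- (\<theta> * r))) \<partial>lborel)"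
    using True \<open>0 \<le> c\<close> by (intro nn_integral_cong) (auto simp: c_def ennreal_mult'[symmetric] indicator_def)
  also have "\<dots> = ennreal c * ennreal (1 / \<theta>)"
    by (subst nn_integral_cmult) (simp_all add: nn_integral_exp_scaled \<theta>)
  also have "\<dots> = ennreal (c / \<theta>)"
    using \<open>0 \<le> c\<close> by (simp add: ennreal_mult'[symmetric])
  also have "c / \<theta> = theta_density a l \<theta>"
    using True by (simp add: c_def theta_density_def mult_ac)
  finally show ?thesis ..
qed (simp add: theta_density_def)

lemma nn_integral_theta_kernel_exp:
  fixes a l s r :: real assumes a: "0 < a" "a < 1" and l: "0 < l" and s: "0 \<le> s"
  shows "(\<integral>\<^sup>+\<theta>. ennreal (l powr a / (Gamma (1 - a) * Gamma a) * indicator {l..} \<theta> * (\<theta> - l) powr (- a)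
            * indicator {0<..} r * exp (- (\<theta> * (s + r)))) \<partial>lborel)
       = ennreal (l powr a / Gamma a * indicator {0<..} r * exp (- (l * (s + r))) * (s + r) powr (a - 1))"
proof (cases "0 < r")
  case True
  then have sr: "0 < s + r"
    using s by simp
  define c where "c = l powr a / (Gamma (1 - a) * Gamma a)"
  have Gamma_pos: "0 < Gamma a" "0 < Gamma (1 - a)"
    using a by (auto simp: Gamma_real_pos)
  then have "0 < c"
    using l by (simp add: c_def)
  then have "(\<integral>\<^sup>+\<theta>. ennreal (c * indicator {l..} \<theta> * (\<theta> - l) powr (- a) * indicator {0<..} r
                    * exp (- (\<theta> * (s + r)))) \<partial>lborel)
      = (\<integral>\<^sup>+\<theta>. ennreal c * ennreal (indicator {l..} \<theta> * (\<theta> - l) powr (- a) * exp (- (\<theta> * (s + r)))) \<partial>lborel)"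
    using True by (intro nn_integral_cong) (auto simp: ennreal_mult'[symmetric] indicator_def)
  also have "\<dots> = ennreal c * ennreal (exp (- (l * (s + r))) * (Gamma (1 - a) / (s + r) powr (1 - a)))"
    by (subst nn_integral_cmult) (auto simp: nn_integral_shifted_powr_exp sr a)
  also have "\<dots> = ennreal (l powr a / Gamma a * indicator {0<..} r * exp (- (l * (s + r))) * (s + r) powr (a - 1))"
    using True sr Gamma_pos l \<open>0 < c\<close> unfolding c_def
    by (simp add: ennreal_mult'[symmetric] powr_diff field_simps)
  finally show ?thesis
    by (simp add: c_def)
qed simp

lemma nn_integral_theta_density_exp:
  fixes a l s :: real assumes a: "0 < a" "a < 1" and l: "0 < l" and s: "0 \<le> s"
  shows "(\<integral>\<^sup>+\<theta>. ennreal (theta_density a l \<theta>) * ennreal (exp (- (\<theta> * s))) \<partial>lborel)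
       = ennreal (upper_inc_Gamma a (l * s) / Gamma a)"
proof -
  define c where "c = l powr a / (Gamma (1 - a) * Gamma a)"
  define H where "H \<theta> r = c * indicator {l..} \<theta> * (\<theta> - l) powr (- a) * indicator {0<..} r
      * exp (- (\<theta> * (s + r)))" for \<theta> r :: real
  have "H \<theta> r = c * indicator {l..} \<theta> * (\<theta> - l) powr (- a) * indicator {0<..} r * exp (- (\<theta> * r))
      * exp (- (\<theta> * s))" for \<theta> r
    by (simp add: H_def exp_add[symmetric] algebra_simps)
  then have "ennreal (theta_density a l \<theta>) * ennreal (exp (- (\<theta> * s))) = (\<integral>\<^sup>+r. ennreal (H \<theta> r) \<partial>lborel)" for \<theta>
    unfolding theta_density_eq_nn_integral[OF a l] c_def[symmetric]
    by (subst nn_integral_multc[symmetric]) (simp_all add: ennreal_mult'')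
  then have "(\<integral>\<^sup>+\<theta>. ennreal (theta_density a l \<theta>) * ennreal (exp (- (\<theta> * s))) \<partial>lborel)
      = (\<integral>\<^sup>+\<theta>. (\<integral>\<^sup>+r. ennreal (H \<theta> r) \<partial>lborel) \<partial>lborel)"
    by simp
  also have "\<dots> = (\<integral>\<^sup>+r. (\<integral>\<^sup>+\<theta>. ennreal (H \<theta> r) \<partial>lborel) \<partial>lborel)"
    by (rule lborel_pair.Fubini') (simp add: H_def)
  also have "\<dots> = (\<integral>\<^sup>+r. ennreal (l powr a / Gamma a)
                    * ennreal (indicator {0<..} r * exp (- (l * (s + r))) * (s + r) powr (a - 1)) \<partial>lborel)"
    unfolding H_def c_def nn_integral_theta_kernel_exp[OF a l s]
    using Gamma_real_pos[OF a(1)] by (intro nn_integral_cong) (simp add: ennreal_mult'[symmetric] mult.assoc)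
  also have "\<dots> = ennreal (l powr a / Gamma a) * ennreal (upper_inc_Gamma a (l * s) / l powr a)"
    by (subst nn_integral_cmult) (simp_all add: nn_integral_shifted_scaled_gamma_integrand a l s)
  also have "\<dots> = ennreal (upper_inc_Gamma a (l * s) / Gamma a)"
    using l a by (simp add: ennreal_mult'[symmetric] upper_inc_Gamma_nonneg Gamma_real_pos)
  finally show ?thesis .
qed

section \<open>Exponential kernels\<close>

lemma measurable_PiM_subprob_algebra:
  assumes I: "finite I" and K: "K \<in> M \<rightarrow>\<^sub>M subprob_algebra N"
  shows "(\<lambda>x. \<Pi>\<^sub>M i\<in>I. K x) \<in> M \<rightarrow>\<^sub>M subprob_algebra (\<Pi>\<^sub>M i\<in>I. N)"
proof -
  have emeasure_PiE: "emeasure (\<Pi>\<^sub>M i\<in>I. K x) (Pi\<^sub>E I E) = (\<Prod>i\<in>I. emeasure (K x) (E i))"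
    if x: "x \<in> space M" and E: "\<And>i. i \<in> I \<Longrightarrow> E i \<in> sets N" for x E
  proof -
    interpret product_sigma_finite "\<lambda>_. K x"
      using subprob_space_imp_sigma_finite[OF subprob_space_kernel[OF K x]]
      by (simp add: product_sigma_finite_def)
    show ?thesis
      using E sets_kernel[OF K x] by (intro emeasure_PiM I) auto
  qed
  have emeasure_measurable: "(\<lambda>x. emeasure (\<Pi>\<^sub>M i\<in>I. K x) A) \<in> borel_measurable M"
    if "A \<in> prod_algebra I (\<lambda>_. N)" for A
  proof -
    from that obtain E where A: "A = Pi\<^sub>E I E" and E: "E \<in> (\<Pi> i\<in>I. sets N)"
      by (rule prod_algebraE_all)
    have "(\<lambda>x. \<Prod>i\<in>I. emeasure (K x) (E i)) \<in> borel_measurable M"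
      using E K by (intro borel_measurable_prod_ennreal measurable_emeasure_kernel) auto
    then show ?thesis
      by (rule measurable_cong[THEN iffD1, rotated]) (use A E in \<open>simp add: emeasure_PiE Pi_iff\<close>)
  qed
  show ?thesis
  proof (rule measurable_subprob_algebra_generated[where \<Omega>="Pi\<^sub>E I (\<lambda>_. space N)" and G="prod_algebra I (\<lambda>_. N)"])
    show "sets (\<Pi>\<^sub>M i\<in>I. N) = sigma_sets (Pi\<^sub>E I (\<lambda>_. space N)) (prod_algebra I (\<lambda>_. N))"
      by (rule sets_PiM)
    show "prod_algebra I (\<lambda>_. N) \<subseteq> Pow (Pi\<^sub>E I (\<lambda>_. space N))"
      by (rule prod_algebra_sets_into_space)
    show "(\<lambda>x. emeasure (\<Pi>\<^sub>M i\<in>I. K x) (Pi\<^sub>E I (\<lambda>_. space N))) \<in> borel_measurable M"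
      using I by (intro emeasure_measurable prod_algebraI_finite) auto
  next
    fix x assume x: "x \<in> space M"
    interpret subprob_space "K x"
      by (rule subprob_space_kernel[OF K x])
    show "sets (\<Pi>\<^sub>M i\<in>I. K x) = sets (\<Pi>\<^sub>M i\<in>I. N)"
      using sets_kernel[OF K x] by (intro sets_PiM_cong) auto
    have "emeasure (\<Pi>\<^sub>M i\<in>I. K x) (space (\<Pi>\<^sub>M i\<in>I. K x)) = (\<Prod>i\<in>I. emeasure (K x) (space (K x)))"
      using x subprob_measurableD(1)[OF K x] by (simp add: space_PiM emeasure_PiE)
    also have "\<dots> \<le> 1"
      by (intro prod_le_1) (auto simp: emeasure_space_le_1)
    finally show "subprob_space (\<Pi>\<^sub>M i\<in>I. K x)"
      by (intro subprob_spaceI) (auto simp: space_PiM PiE_eq_empty_iff subprob_not_empty)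
  qed (auto intro: Int_stable_prod_algebra emeasure_measurable)
qed

definition exponential_measure :: "real \<Rightarrow> real measure" where
  "exponential_measure \<theta> = density lborel (exponential_density \<theta>)"

lemma sets_exponential_measure[simp, measurable_cong]: "sets (exponential_measure \<theta>) = sets borel"
  by (simp add: exponential_measure_def)

lemma space_exponential_measure[simp]: "space (exponential_measure \<theta>) = UNIV"
  by (simp add: exponential_measure_def)

lemma prob_space_exponential_measure: "0 < \<theta> \<Longrightarrow> prob_space (exponential_measure \<theta>)"
  unfolding exponential_measure_def by (rule prob_space_exponential_density)

lemma subprob_space_exponential_measure: "subprob_space (exponential_measure \<theta>)"
proof (cases "0 < \<theta>")
  case True
  then show ?thesis
    by (intro prob_space_imp_subprob_space prob_space_exponential_measure)
next
  case False
  then have "emeasure (exponential_measure \<theta>) UNIV = 0"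
    unfolding exponential_measure_def
    by (subst emeasure_density) (auto intro!: nn_integral_zero' AE_I2 simp: exponential_density_def
        ennreal_neg mult_nonpos_nonneg)
  then show ?thesis
    by (intro subprob_spaceI) auto
qed

lemma measurable_exponential_measure:
  "exponential_measure \<in> borel \<rightarrow>\<^sub>M subprob_algebra borel"
proof (rule measurable_subprob_algebra)
  fix A :: "real set" assume [measurable]: "A \<in> sets borel"
  have "(\<lambda>\<theta>. emeasure (exponential_measure \<theta>) A)
      = (\<lambda>\<theta>. \<integral>\<^sup>+x. ennreal (exponential_density \<theta> x) * indicator A x \<partial>lborel)"
    by (auto simp: exponential_measure_def emeasure_density)
  also have "\<dots> \<in> borel_measurable borel"
    unfolding exponential_density_def by measurable
  finally show "(\<lambda>\<theta>. emeasure (exponential_measure \<theta>) A) \<in> borel_measurable borel" .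
qed (auto simp: subprob_space_exponential_measure)

lemma emeasure_exponential_measure_greaterThan:
  assumes \<theta>: "0 < \<theta>" and t: "0 \<le> t"
  shows "emeasure (exponential_measure \<theta>) {t<..} = ennreal (exp (- (\<theta> * t)))"
proof -
  interpret prob_space "exponential_measure \<theta>"
    using \<theta> by (rule prob_space_exponential_measure)
  have "emeasure (exponential_measure \<theta>) {..t} = ennreal (1 - exp (- (\<theta> * t)))"
    using emeasure_erlang_density[OF \<theta>, of 0 t] t
    by (simp add: exponential_measure_def erlang_CDF_0 mult.commute)
  then have "measure (exponential_measure \<theta>) {..t} = 1 - exp (- (\<theta> * t))"
    using \<theta> t by (simp add: emeasure_eq_measure)
  moreover have "{t<..} = space (exponential_measure \<theta>) - {..t}"
    by auto
  ultimately show ?thesis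
    using prob_compl[of "{..t}"] by (simp add: emeasure_eq_measure)
qed

lemma emeasure_PiM_exponential_survival:
  assumes \<theta>: "0 < \<theta>" and J: "finite J" and I: "I \<subseteq> J" and x: "\<And>i. i \<in> I \<Longrightarrow> 0 \<le> x i"
  shows "emeasure (\<Pi>\<^sub>M j\<in>J. exponential_measure \<theta>) (\<Pi>\<^sub>E j\<in>J. if j \<in> I then {x j<..} else UNIV)
       = ennreal (exp (- (\<theta> * (\<Sum>i\<in>I. x i))))"
proof -
  interpret product_prob_space "\<lambda>_. exponential_measure \<theta>"
    unfolding product_prob_space_def product_prob_space_axioms_def product_sigma_finite_def
    using prob_space_exponential_measure[OF \<theta>] by (auto simp: prob_space_imp_sigma_finite)
  have "emeasure (\<Pi>\<^sub>M j\<in>J. exponential_measure \<theta>) (\<Pi>\<^sub>E j\<in>J. if j \<in> I then {x j<..} else UNIV)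
      = (\<Prod>j\<in>J. emeasure (exponential_measure \<theta>) (if j \<in> I then {x j<..} else UNIV))"
    by (rule emeasure_PiM) (auto simp: J)
  also have "\<dots> = (\<Prod>j\<in>J. if j \<in> I then ennreal (exp (- (\<theta> * x j))) else 1)"
    using prob_space.emeasure_space_1[OF prob_space_exponential_measure[OF \<theta>]]
    by (intro prod.cong) (auto simp: emeasure_exponential_measure_greaterThan \<theta> x)
  also have "\<dots> = (\<Prod>i\<in>I. ennreal (exp (- (\<theta> * x i))))"
    using I J by (simp add: prod.If_cases Int_absorb1)
  also have "\<dots> = ennreal (exp (- (\<theta> * (\<Sum>i\<in>I. x i))))"
    using finite_subset[OF I J]
    by (simp add: prod_ennreal sum_distrib_left sum_negf[symmetric] exp_sum)
  finally show ?thesis .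
qed

section \<open>Joint survival function\<close>

lemma measure_exponential_mixture_survival:
  fixes \<alpha> l :: real and n :: nat
  assumes a: "0 < \<alpha>" "\<alpha> < 1" and l: "0 < l"
    and I: "I \<subseteq> {..<n}" and x: "\<And>i. i \<in> I \<Longrightarrow> 0 \<le> x i"
  shows "measure (density lborel (theta_density \<alpha> l) \<bind>
            (\<lambda>\<theta>. distr (\<Pi>\<^sub>M i\<in>{..<n}. exponential_measure \<theta>)
                    (borel \<Otimes>\<^sub>M (\<Pi>\<^sub>M i\<in>{..<n}. borel)) (\<lambda>y. (\<theta>, y))))
           (UNIV \<times> (\<Pi>\<^sub>E i\<in>{..<n}. if i \<in> I then {x i<..} else UNIV))
       = upper_inc_Gamma \<alpha> (l * (\<Sum>i\<in>I. x i)) / Gamma \<alpha>"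
    (is "measure (?N \<bind> ?K) ?A = _")
proof -
  have A: "?A \<in> sets (borel \<Otimes>\<^sub>M (\<Pi>\<^sub>M i\<in>{..<n}. borel))"
    by (intro pair_measureI sets_PiM_I_finite) auto
  have K: "?K \<in> borel \<rightarrow>\<^sub>M subprob_algebra (borel \<Otimes>\<^sub>M (\<Pi>\<^sub>M i\<in>{..<n}. borel))"
    by (rule measurable_distr2[OF _ measurable_PiM_subprob_algebra[OF _ measurable_exponential_measure]])
       simp_all
  have emeasure_K: "emeasure (?K \<theta>) ?A = ennreal (exp (- (\<theta> * (\<Sum>i\<in>I. x i))))" if \<theta>: "0 < \<theta>" for \<theta>
  proof -
    have "emeasure (?K \<theta>) ?A = emeasure (\<Pi>\<^sub>M i\<in>{..<n}. exponential_measure \<theta>)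
        ((\<lambda>y. (\<theta>, y)) -` ?A \<inter> space (\<Pi>\<^sub>M i\<in>{..<n}. exponential_measure \<theta>))"
      using A by (intro emeasure_distr) simp_all
    also have "(\<lambda>y. (\<theta>, y)) -` ?A \<inter> space (\<Pi>\<^sub>M i\<in>{..<n}. exponential_measure \<theta>)
        = (\<Pi>\<^sub>E i\<in>{..<n}. if i \<in> I then {x i<..} else UNIV)"
      by (auto simp: space_PiM PiE_iff)
    finally show ?thesis
      using emeasure_PiM_exponential_survival[OF \<theta> _ I x] by simp
  qed
  have "emeasure (?N \<bind> ?K) ?A = (\<integral>\<^sup>+\<theta>. emeasure (?K \<theta>) ?A \<partial>?N)"
    using K by (intro emeasure_bind[OF _ _ A]) (simp_all add: measurable_cong_sets[OF sets_density refl])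
  also have "\<dots> = (\<integral>\<^sup>+\<theta>. ennreal (theta_density \<alpha> l \<theta>) * emeasure (?K \<theta>) ?A \<partial>lborel)"
    using measurable_emeasure_kernel[OF K A] theta_density_nonneg[OF a l]
    by (intro nn_integral_density) simp_all
  also have "\<dots> = (\<integral>\<^sup>+\<theta>. ennreal (theta_density \<alpha> l \<theta>) * ennreal (exp (- (\<theta> * (\<Sum>i\<in>I. x i)))) \<partial>lborel)"
    using l by (intro nn_integral_cong) (auto simp: theta_density_def emeasure_K)
  also have "\<dots> = ennreal (upper_inc_Gamma \<alpha> (l * (\<Sum>i\<in>I. x i)) / Gamma \<alpha>)"
    using x by (intro nn_integral_theta_density_exp a l sum_nonneg) auto
  finally show ?thesis
    using a by (simp add: measure_def upper_inc_Gamma_nonneg Gamma_real_pos)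
qed

lemma measure_joint_survival:
  fixes M :: "'a measure" and \<Theta> :: "'a \<Rightarrow> real" and X :: "nat \<Rightarrow> 'a \<Rightarrow> real"
    and \<alpha> l :: real and n :: nat
  assumes a: "0 < \<alpha>" "\<alpha> < 1" and l: "0 < l"
    and [measurable]: "\<Theta> \<in> borel_measurable M" and X: "\<And>i. i < n \<Longrightarrow> X i \<in> borel_measurable M"
    and joint: "distr M (borel \<Otimes>\<^sub>M (\<Pi>\<^sub>M i\<in>{..<n}. borel))
                   (\<lambda>\<omega>. (\<Theta> \<omega>, \<lambda>i\<in>{..<n}. X i \<omega>))
              = density lborel (theta_density \<alpha> l) \<bind>
                  (\<lambda>\<theta>. distr (\<Pi>\<^sub>M i\<in>{..<n}. density lborel (exponential_density \<theta>))
                          (borel \<Otimes>\<^sub>M (\<Pi>\<^sub>M i\<in>{..<n}. borel)) (\<lambda>x. (\<theta>, x)))"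
    and I: "I \<subseteq> {..<n}" and x: "\<And>i. i \<in> I \<Longrightarrow> 0 \<le> x i"
  shows "measure M {\<omega>\<in>space M. \<forall>i\<in>I. x i < X i \<omega>} = upper_inc_Gamma \<alpha> (l * (\<Sum>i\<in>I. x i)) / Gamma \<alpha>"
proof -
  define F where "F \<omega> = (\<Theta> \<omega>, \<lambda>i\<in>{..<n}. X i \<omega>)" for \<omega>
  define A where "A = (UNIV :: real set) \<times> (\<Pi>\<^sub>E i\<in>{..<n}. if i \<in> I then {x i<..} else UNIV)"
  have F: "F \<in> M \<rightarrow>\<^sub>M borel \<Otimes>\<^sub>M (\<Pi>\<^sub>M i\<in>{..<n}. borel)"
    unfolding F_def using X by measurable
  have "{\<omega>\<in>space M. \<forall>i\<in>I. x i < X i \<omega>} = F -` A \<inter> space M"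
    using I by (auto simp: F_def A_def PiE_iff split: if_splits)
  then have "measure M {\<omega>\<in>space M. \<forall>i\<in>I. x i < X i \<omega>}
      = measure (distr M (borel \<Otimes>\<^sub>M (\<Pi>\<^sub>M i\<in>{..<n}. borel)) F) A"
    using F by (simp add: measure_distr A_def)
  also have "\<dots> = upper_inc_Gamma \<alpha> (l * (\<Sum>i\<in>I. x i)) / Gamma \<alpha>"
    using joint measure_exponential_mixture_survival[OF a l I x]
    unfolding F_def A_def exponential_measure_def by simp
  finally show ?thesis .
qed

theorem theorem5:
  fixes M :: "'a measure" and \<Theta> :: "'a \<Rightarrow> real" and X :: "nat \<Rightarrow> 'a \<Rightarrow> real"
    and \<alpha> l :: real and n :: nat
  assumes "prob_space M"
    and "0 < \<alpha>" and "\<alpha> < 1" and "0 < l"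
    and "\<Theta> \<in> borel_measurable M" and "\<And>i. i < n \<Longrightarrow> X i \<in> borel_measurable M"
    and joint: "distr M (borel \<Otimes>\<^sub>M (\<Pi>\<^sub>M i\<in>{..<n}. borel))
                   (\<lambda>\<omega>. (\<Theta> \<omega>, \<lambda>i\<in>{..<n}. X i \<omega>))
              = density lborel (theta_density \<alpha> l) \<bind>
                  (\<lambda>\<theta>. distr (\<Pi>\<^sub>M i\<in>{..<n}. density lborel (exponential_density \<theta>))
                          (borel \<Otimes>\<^sub>M (\<Pi>\<^sub>M i\<in>{..<n}. borel)) (\<lambda>x. (\<theta>, x)))"
  shows "(\<forall>i<n. \<forall>t\<ge>0. measure M {\<omega>\<in>space M. X i \<omega> > t} = marg_surv \<alpha> l t)
       \<and> (\<forall>x. (\<forall>i<n. 0 \<le> x i) \<longrightarrow>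
            measure M {\<omega>\<in>space M. \<forall>i<n. X i \<omega> > x i}
              = surv_copula \<alpha> n (\<lambda>i. marg_surv \<alpha> l (x i)))"
proof -
  note survival = measure_joint_survival[OF assms(2-7)]
  have "measure M {\<omega>\<in>space M. X i \<omega> > t} = marg_surv \<alpha> l t" if "i < n" and "0 \<le> t" for i t
    using survival[of "{i}" "\<lambda>_. t"] that by (simp add: marg_surv_def)
  moreover have "measure M {\<omega>\<in>space M. \<forall>i<n. X i \<omega> > x i} = surv_copula \<alpha> n (\<lambda>i. marg_surv \<alpha> l (x i))"
    if x: "\<forall>i<n. 0 \<le> x i" for x
  proof -
    have "marg_surv \<alpha> l (x i) = 1 - gamma_cdf \<alpha> (l * x i)" if "i < n" for i
      using gamma_cdf_upper_inc_Gamma[of \<alpha> "l * x i"] x that \<open>0 < \<alpha>\<close> \<open>0 < l\<close>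
      by (simp add: marg_surv_def)
    then have "(\<Sum>i<n. gamma_quantile \<alpha> (1 - marg_surv \<alpha> l (x i))) = l * (\<Sum>i<n. x i)"
      using x \<open>0 < \<alpha>\<close> \<open>0 < l\<close> by (simp add: gamma_quantile_gamma_cdf sum_distrib_left)
    moreover have "0 \<le> l * (\<Sum>i<n. x i)"
      using x \<open>0 < l\<close> by (intro mult_nonneg_nonneg sum_nonneg) auto
    ultimately show ?thesis
      using survival[of "{..<n}" x] x \<open>0 < \<alpha>\<close>
      by (simp add: surv_copula_def gamma_cdf_upper_inc_Gamma Ball_def)
  qed
  ultimately show ?thesis
    by blast
qed

end
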